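(* There exist a strictly increasing sequence $(m_n)_{n\in\mathbb N}$ of natural numbers with $m_0=0$, finite groups $G_n$ ($n\in\mathbb N$), group homomorphisms $c_n\colon \mathbb F({}^n2)\to G_n$, and actions $\sigma_n$ of $G_n$ on $I_n:=[m_n,m_{n+1})=\{k\in\mathbb N: m_n\le k<m_{n+1}\}$, each faithful and transitive, such that for all $n\in\mathbb N$: (A) $\sum_{m<n}|I_m| < |I_n|-1$, and (B) the restriction of $c_n$ to $W_n$ is injective.
   Context: For $n\in\mathbb N$, ${}^n2$ is the finite set of binary sequences of length $n$ and $\mathbb F({}^n2)$ is the free group with free generating set ${}^n2$ (so $\mathbb F({}^0 2)$ is trivial). $W_n$ denotes the set of reduced words of $\mathbb F({}^n2)$ of word length at most $n$. *)

theory Defs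
  imports "HOL-Algebra.Algebra"
begin

text \<open>Words over an alphabet: a letter is a pair (b, x); b = True means the
generator x, b = False means its inverse.\<close>

type_synonym 'a fword = "(bool \<times> 'a) list"

definition cancels :: "bool \<times> 'a \<Rightarrow> bool \<times> 'a \<Rightarrow> bool" where
  "cancels a b \<longleftrightarrow> snd a = snd b \<and> fst a \<noteq> fst b"

definition reduced :: "'a fword \<Rightarrow> bool" where
  "reduced w \<longleftrightarrow> (\<forall>i. Suc i < length w \<longrightarrow> \<not> cancels (w ! i) (w ! Suc i))"

fun red_cons :: "bool \<times> 'a \<Rightarrow> 'a fword \<Rightarrow> 'a fword" where
  "red_cons a [] = [a]"
| "red_cons a (b # w) = (if cancels a b then w else a # b # w)"

definition reduce :: "'a fword \<Rightarrow> 'a fword" where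
  "reduce w = foldr red_cons w []"

definition free_group :: "'a set \<Rightarrow> 'a fword monoid" where
  "free_group S = \<lparr>carrier = {w. reduced w \<and> snd ` set w \<subseteq> S},
                   monoid.mult = (\<lambda>u v. reduce (u @ v)),
                   monoid.one = []\<rparr>"

definition bseq :: "nat \<Rightarrow> bool list set" where
  "bseq n = {xs. length xs = n}"

definition W :: "nat \<Rightarrow> bool list fword set" where
  "W n = {w \<in> carrier (free_group (bseq n)). length w \<le> n}"

definition Ival :: "(nat \<Rightarrow> nat) \<Rightarrow> nat \<Rightarrow> nat set" where
  "Ival m n = {m n..<m (Suc n)}"

end

theory Submission
  imports Defs
begin

text \<open>Let \<open>B\<close> be the ball of radius \<open>N \<ge> n\<close> in the Cayley tree of \<open>F(\<^sup>n2)\<close>, i.e. the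
reduced words of length at most \<open>N\<close>. Each letter \<open>a\<close> permutes \<open>B\<close>: it acts by left
multiplication wherever the result stays in \<open>B\<close>, and the words of length \<open>N\<close> that would leave
the ball are sent to their letterwise inverses instead. This gives a homomorphism
\<open>F(\<^sup>n2) \<rightarrow> Sym(B)\<close> under which every word of \<open>B\<close> is the image of the empty word, so it is
injective on \<open>B \<supseteq> W\<^sub>n\<close>. Copying \<open>Sym(B)\<close> onto a block \<open>I\<^sub>n\<close> of naturals of the same size and
letting it act on itself by left translation gives a faithful transitive action, and choosing
\<open>N = n + m\<^sub>n + 1\<close> makes \<open>|I\<^sub>n| \<ge> |B| \<ge> m\<^sub>n + 2\<close>.\<close>

lemma cancels_iff: "cancels a b \<longleftrightarrow> b = apfst Not a"
  by (cases a; cases b) (auto simp: cancels_def)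

lemma apfst_Not_Not [simp]: "apfst Not (apfst Not a) = a"
  by (cases a) simp

lemma apfst_Not_eq_iff: "apfst Not x = y \<longleftrightarrow> x = apfst Not y"
  by auto

lemma reduced_Nil [simp]: "reduced []"
  by (simp add: reduced_def)

lemma reduced_Cons: "reduced (a # w) \<longleftrightarrow> reduced w \<and> (w = [] \<or> hd w \<noteq> apfst Not a)"
proof -
  have "reduced (a # w) \<longleftrightarrow> (w = [] \<or> \<not> cancels a (hd w)) \<and> reduced w"
    unfolding reduced_def by (cases w) (auto simp: nth_Cons' less_Suc_eq_0_disj)
  then show ?thesis
    by (auto simp: cancels_iff)
qed

lemma reduced_map_apfst_Not: "reduced (map (apfst Not) w) \<longleftrightarrow> reduced w"
  by (auto simp: reduced_def cancels_def)

lemma carrier_free_group: "carrier (free_group S) = {w. reduced w \<and> snd ` set w \<subseteq> S}"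
  by (simp add: free_group_def)

lemma reduce_Nil [simp]: "reduce [] = []"
  by (simp add: reduce_def)

lemma reduce_Cons [simp]: "reduce (a # w) = red_cons a (reduce w)"
  by (simp add: reduce_def)

lemma set_red_cons: "snd ` set (red_cons a w) \<subseteq> insert (snd a) (snd ` set w)"
  by (cases w) auto

lemma set_reduce: "snd ` set (reduce w) \<subseteq> snd ` set w"
proof (induction w)
  case (Cons a w)
  have "snd ` set (red_cons a (reduce w)) \<subseteq> insert (snd a) (snd ` set (reduce w))"
    by (rule set_red_cons)
  also have "\<dots> \<subseteq> insert (snd a) (snd ` set w)"
    using Cons.IH by (rule insert_mono)
  finally show ?case by simp
qed simp

definition eval_word :: "('b, 'c) monoid_scheme \<Rightarrow> (bool \<times> 'a \<Rightarrow> 'b) \<Rightarrow> 'a fword \<Rightarrow> 'b" where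
  "eval_word H e w = foldr (\<lambda>a x. e a \<otimes>\<^bsub>H\<^esub> x) w \<one>\<^bsub>H\<^esub>"

lemma eval_word_Nil [simp]: "eval_word H e [] = \<one>\<^bsub>H\<^esub>"
  by (simp add: eval_word_def)

lemma eval_word_Cons [simp]: "eval_word H e (a # w) = e a \<otimes>\<^bsub>H\<^esub> eval_word H e w"
  by (simp add: eval_word_def)

locale free_group_eval = group H for H (structure) +
  fixes S :: "'x set" and e :: "bool \<times> 'x \<Rightarrow> 'a"
  assumes letter_closed: "snd a \<in> S \<Longrightarrow> e a \<in> carrier H"
    and letter_inverse: "snd a \<in> S \<Longrightarrow> e a \<otimes> e (apfst Not a) = \<one>"
begin

lemma eval_word_closed: "snd ` set w \<subseteq> S \<Longrightarrow> eval_word H e w \<in> carrier H"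
  by (induction w) (auto simp: letter_closed)

lemma eval_word_red_cons:
  assumes a: "snd a \<in> S" and w: "snd ` set w \<subseteq> S"
  shows "eval_word H e (red_cons a w) = e a \<otimes> eval_word H e w"
proof (cases w)
  case (Cons b v)
  have b: "snd b \<in> S" and v: "snd ` set v \<subseteq> S"
    using w Cons by auto
  show ?thesis
  proof (cases "cancels a b")
    case True
    have "e a \<otimes> (e b \<otimes> eval_word H e v) = (e a \<otimes> e b) \<otimes> eval_word H e v"
      using a b v by (simp add: m_assoc letter_closed eval_word_closed)
    also have "\<dots> = eval_word H e v"
      using a v True by (simp add: cancels_iff letter_inverse eval_word_closed)
    finally show ?thesis
      using Cons True by simp
  qed (use Cons in simp)
qed simp

lemma eval_word_reduce: "snd ` set w \<subseteq> S \<Longrightarrow> eval_word H e (reduce w) = eval_word H e w"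
proof (induction w)
  case (Cons a w)
  have "snd ` set (reduce w) \<subseteq> S"
    using Cons.prems set_reduce[of w] by auto
  with Cons show ?case by (simp add: eval_word_red_cons)
qed simp

lemma eval_word_append:
  "snd ` set u \<subseteq> S \<Longrightarrow> snd ` set v \<subseteq> S \<Longrightarrow>
    eval_word H e (u @ v) = eval_word H e u \<otimes> eval_word H e v"
  by (induction u) (simp_all add: m_assoc letter_closed eval_word_closed)

lemma eval_word_hom: "eval_word H e \<in> hom (free_group S) H"
proof (rule homI)
  fix u v assume "u \<in> carrier (free_group S)" "v \<in> carrier (free_group S)"
  then have uv: "snd ` set u \<subseteq> S" "snd ` set v \<subseteq> S"
    by (auto simp: carrier_free_group)
  then have "eval_word H e (reduce (u @ v)) = eval_word H e (u @ v)"
    by (intro eval_word_reduce) auto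
  also have "\<dots> = eval_word H e u \<otimes> eval_word H e v"
    using uv by (rule eval_word_append)
  moreover have "u \<otimes>\<^bsub>free_group S\<^esub> v = reduce (u @ v)"
    by (simp add: free_group_def)
  ultimately show "eval_word H e (u \<otimes>\<^bsub>free_group S\<^esub> v) = eval_word H e u \<otimes> eval_word H e v"
    by simp
qed (simp add: carrier_free_group eval_word_closed)

end

definition word_ball :: "'a set \<Rightarrow> nat \<Rightarrow> 'a fword set" where
  "word_ball S N = {w \<in> carrier (free_group S). length w \<le> N}"

lemma W_eq_word_ball: "W n = word_ball (bseq n) n"
  by (simp add: W_def word_ball_def)

lemma word_ball_mono: "N \<le> N' \<Longrightarrow> word_ball S N \<subseteq> word_ball S N'"
  by (auto simp: word_ball_def)

lemma Nil_in_word_ball: "[] \<in> word_ball S N"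
  by (simp add: word_ball_def carrier_free_group)

text \<open>The words of length \<open>N\<close> not starting with \<open>a\<^sup>-\<^sup>1\<close> are exactly those that \<open>a \<cdot> _\<close> would push out
of the ball, and the words of length \<open>N\<close> not starting with \<open>a\<close> are exactly those not reached by
\<open>a \<cdot> _\<close> from inside; flipping every letter matches the two sets bijectively.\<close>

definition letter_perm :: "nat \<Rightarrow> bool \<times> 'a \<Rightarrow> 'a fword \<Rightarrow> 'a fword" where
  "letter_perm N a w =
     (if w \<noteq> [] \<and> hd w = apfst Not a then tl w
      else if length w < N then a # w
      else map (apfst Not) w)"

lemma letter_perm_closed:
  assumes "snd a \<in> S" "w \<in> word_ball S N"
  shows "letter_perm N a w \<in> word_ball S N"
  using assms
  by (cases w) (auto simp: letter_perm_def word_ball_def carrier_free_group reduced_Cons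
      reduced_map_apfst_Not hd_map apfst_Not_eq_iff)

lemma letter_perm_inverse:
  assumes "w \<in> word_ball S N"
  shows "letter_perm N (apfst Not a) (letter_perm N a w) = w"
  using assms
  by (cases w) (auto simp: letter_perm_def word_ball_def carrier_free_group reduced_Cons
      hd_map comp_def)

lemma letter_perm_reduced_Cons:
  "reduced (a # w) \<Longrightarrow> length w < N \<Longrightarrow> letter_perm N a w = a # w"
  by (cases w) (auto simp: letter_perm_def reduced_Cons)

lemma carrier_BijGroup: "carrier (BijGroup S) = Bij S"
  by (simp add: BijGroup_def)

lemma mult_BijGroup: "f \<in> Bij S \<Longrightarrow> g \<in> Bij S \<Longrightarrow> f \<otimes>\<^bsub>BijGroup S\<^esub> g = compose S f g"
  by (simp add: BijGroup_def)

lemma one_BijGroup: "\<one>\<^bsub>BijGroup S\<^esub> = (\<lambda>x\<in>S. x)"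
  by (simp add: BijGroup_def)

definition letter_bij :: "'a set \<Rightarrow> nat \<Rightarrow> bool \<times> 'a \<Rightarrow> 'a fword \<Rightarrow> 'a fword" where
  "letter_bij S N a = restrict (letter_perm N a) (word_ball S N)"

lemma letter_bij_in_Bij:
  assumes "snd a \<in> S"
  shows "letter_bij S N a \<in> Bij (word_ball S N)"
proof -
  have "bij_betw (letter_perm N a) (word_ball S N) (word_ball S N)"
  proof (rule bij_betw_byWitness[where f' = "letter_perm N (apfst Not a)"])
    show "\<forall>w\<in>word_ball S N. letter_perm N (apfst Not a) (letter_perm N a w) = w"
      by (simp add: letter_perm_inverse)
    show "\<forall>w\<in>word_ball S N. letter_perm N a (letter_perm N (apfst Not a) w) = w"
      using letter_perm_inverse[of _ S N "apfst Not a"] by simp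
    show "letter_perm N a ` word_ball S N \<subseteq> word_ball S N"
      using assms letter_perm_closed by blast
    show "letter_perm N (apfst Not a) ` word_ball S N \<subseteq> word_ball S N"
      using assms letter_perm_closed[of "apfst Not a"] by auto
  qed
  then show ?thesis
    by (simp add: letter_bij_def Bij_def)
qed

lemma letter_bij_inverse:
  assumes "snd a \<in> S"
  shows "letter_bij S N a \<otimes>\<^bsub>BijGroup (word_ball S N)\<^esub> letter_bij S N (apfst Not a)
    = \<one>\<^bsub>BijGroup (word_ball S N)\<^esub>"
proof -
  have "compose (word_ball S N) (letter_bij S N a) (letter_bij S N (apfst Not a))
      = (\<lambda>w\<in>word_ball S N. w)"
    using letter_perm_closed[of "apfst Not a" S] letter_perm_inverse[of _ S N "apfst Not a"] assms
    by (auto simp: compose_def letter_bij_def)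
  moreover have "letter_bij S N a \<in> Bij (word_ball S N)"
    "letter_bij S N (apfst Not a) \<in> Bij (word_ball S N)"
    using assms by (simp_all add: letter_bij_in_Bij)
  ultimately show ?thesis
    by (simp add: mult_BijGroup one_BijGroup)
qed

definition ball_rep :: "'a set \<Rightarrow> nat \<Rightarrow> 'a fword \<Rightarrow> 'a fword \<Rightarrow> 'a fword" where
  "ball_rep S N = eval_word (BijGroup (word_ball S N)) (letter_bij S N)"

lemma free_group_eval_letter_bij: "free_group_eval (BijGroup (word_ball S N)) S (letter_bij S N)"
  by (intro free_group_eval.intro free_group_eval_axioms.intro group_BijGroup)
    (simp_all only: letter_bij_inverse letter_bij_in_Bij carrier_BijGroup)

lemma ball_rep_hom: "ball_rep S N \<in> hom (free_group S) (BijGroup (word_ball S N))"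
  unfolding ball_rep_def by (rule free_group_eval.eval_word_hom[OF free_group_eval_letter_bij])

lemma ball_rep_Nil: "u \<in> word_ball S N \<Longrightarrow> ball_rep S N u [] = u"
proof (induction u)
  case (Cons a u)
  have a: "snd a \<in> S" and u: "u \<in> word_ball S N" and au: "reduced (a # u)" "length u < N"
    using Cons.prems by (auto simp: word_ball_def carrier_free_group reduced_Cons)
  have "ball_rep S N u \<in> Bij (word_ball S N)"
    using hom_in_carrier[OF ball_rep_hom[of S N]] u by (simp add: word_ball_def carrier_BijGroup)
  then have "ball_rep S N (a # u) = compose (word_ball S N) (letter_bij S N a) (ball_rep S N u)"
    using a by (simp add: ball_rep_def mult_BijGroup letter_bij_in_Bij)
  then have "ball_rep S N (a # u) [] = letter_perm N a u"
    using Cons.IH u by (simp add: compose_def letter_bij_def Nil_in_word_ball)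
  also have "\<dots> = a # u"
    using au by (rule letter_perm_reduced_Cons)
  finally show ?case .
qed (simp add: ball_rep_def one_BijGroup Nil_in_word_ball)

lemma inj_on_ball_rep: "inj_on (ball_rep S N) (word_ball S N)"
  by (metis ball_rep_Nil inj_onI)

lemma finite_word_ball: "finite S \<Longrightarrow> finite (word_ball S N)"
proof -
  assume "finite S"
  then have "finite {w. set w \<subseteq> (UNIV :: bool set) \<times> S \<and> length w \<le> N}"
    by (intro finite_lists_length_le) auto
  moreover have "word_ball S N \<subseteq> {w. set w \<subseteq> (UNIV :: bool set) \<times> S \<and> length w \<le> N}"
    by (auto simp: word_ball_def carrier_free_group)
  ultimately show ?thesis
    by (rule finite_subset[rotated])
qed

lemma card_word_ball_ge:
  assumes "finite S" "x \<in> S"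
  shows "Suc N \<le> card (word_ball S N)"
proof -
  have "inj_on (\<lambda>k. replicate k (True, x)) {..N}"
    by (auto simp: inj_on_def)
  moreover have "(\<lambda>k. replicate k (True, x)) ` {..N} \<subseteq> word_ball S N"
    using assms by (auto simp: word_ball_def carrier_free_group reduced_def cancels_def)
  ultimately show ?thesis
    using card_inj_on_le[OF _ _ finite_word_ball[OF assms(1)]] by fastforce
qed

lemma finite_Bij: "finite S \<Longrightarrow> finite (Bij S)"
proof -
  assume "finite S"
  then have "finite (S \<rightarrow>\<^sub>E S)"
    by (intro finite_PiE)
  moreover have "Bij S \<subseteq> S \<rightarrow>\<^sub>E S"
    by (simp add: PiE_def subset_iff Bij_imp_funcset Bij_imp_extensional)
  ultimately show ?thesis
    by (rule finite_subset[rotated])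
qed

lemma card_word_ball_le_card_Bij:
  assumes "finite S"
  shows "card (word_ball S N) \<le> card (Bij (word_ball S N))"
proof (rule card_inj_on_le[OF inj_on_ball_rep])
  show "ball_rep S N ` word_ball S N \<subseteq> Bij (word_ball S N)"
    using hom_carrier[OF ball_rep_hom[of S N]]
    by (auto simp: word_ball_def carrier_BijGroup)
  show "finite (Bij (word_ball S N))"
    using assms by (intro finite_Bij finite_word_ball)
qed

definition transport_group :: "('a, 'b) monoid_scheme \<Rightarrow> ('a \<Rightarrow> 'c) \<Rightarrow> 'c set \<Rightarrow> 'c monoid" where
  "transport_group H f A =
     \<lparr>carrier = A,
      monoid.mult = (\<lambda>x y. f (inv_into (carrier H) f x \<otimes>\<^bsub>H\<^esub> inv_into (carrier H) f y)),
      monoid.one = f \<one>\<^bsub>H\<^esub>\<rparr>"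

lemma transport_group_hom:
  assumes "bij_betw f (carrier H) A"
  shows "f \<in> hom H (transport_group H f A)"
  using assms by (auto simp: hom_def transport_group_def bij_betw_def)

lemma group_transport_group:
  assumes "group H" "bij_betw f (carrier H) A"
  shows "group (transport_group H f A)"
proof -
  have "group ((transport_group H f A)\<lparr>carrier := f ` carrier H, one := f \<one>\<^bsub>H\<^esub>\<rparr>)"
    using assms by (intro group.hom_imp_img_group transport_group_hom)
  moreover have "(transport_group H f A)\<lparr>carrier := f ` carrier H, one := f \<one>\<^bsub>H\<^esub>\<rparr>
      = transport_group H f A"
    using assms by (simp add: transport_group_def bij_betw_def)
  ultimately show ?thesis
    by simp
qed

definition left_translation :: "('a, 'b) monoid_scheme \<Rightarrow> 'a \<Rightarrow> 'a \<Rightarrow> 'a" where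
  "left_translation G g = (\<lambda>x\<in>carrier G. g \<otimes>\<^bsub>G\<^esub> x)"

context group
begin

lemma left_translation_in_Bij:
  assumes "g \<in> carrier G"
  shows "left_translation G g \<in> Bij (carrier G)"
proof -
  have "bij_betw (\<lambda>x. g \<otimes> x) (carrier G) (carrier G)"
    by (rule bij_betw_byWitness[where f' = "\<lambda>x. inv g \<otimes> x"])
      (use assms in \<open>auto simp: m_assoc[symmetric]\<close>)
  then show ?thesis
    by (simp add: Bij_def left_translation_def)
qed

lemma group_action_left_translation: "group_action G (carrier G) (left_translation G)"
proof -
  have "left_translation G \<in> hom G (BijGroup (carrier G))"
  proof (rule homI)
    fix g h assume gh: "g \<in> carrier G" "h \<in> carrier G"
    have "left_translation G (g \<otimes> h)
        = compose (carrier G) (left_translation G g) (left_translation G h)"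
      using gh by (auto simp: compose_def left_translation_def m_assoc)
    then show "left_translation G (g \<otimes> h)
        = left_translation G g \<otimes>\<^bsub>BijGroup (carrier G)\<^esub> left_translation G h"
      using gh by (simp add: mult_BijGroup left_translation_in_Bij)
  qed (simp add: carrier_BijGroup left_translation_in_Bij)
  then show ?thesis
    by (simp add: group_action_def group_hom_def group_hom_axioms_def group_BijGroup)
qed

lemma faithful_action_left_translation: "faithful_action G (carrier G) (left_translation G)"
proof -
  have "inj_on (left_translation G) (carrier G)"
  proof (rule inj_onI)
    fix g h assume "g \<in> carrier G" "h \<in> carrier G" "left_translation G g = left_translation G h"
    then have "left_translation G g \<one> = left_translation G h \<one>"
      by simp
    with \<open>g \<in> carrier G\<close> \<open>h \<in> carrier G\<close> show "g = h"
      by (simp add: left_translation_def)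
  qed
  then show ?thesis
    by (simp add: faithful_action_def faithful_action_axioms_def group_action_left_translation)
qed

lemma transitive_action_left_translation: "transitive_action G (carrier G) (left_translation G)"
proof -
  have "\<exists>g\<in>carrier G. left_translation G g x = y" if "x \<in> carrier G" "y \<in> carrier G" for x y
    using that by (intro bexI[of _ "y \<otimes> inv x"]) (simp_all add: left_translation_def m_assoc)
  then show ?thesis
    by (simp add: transitive_action_def transitive_action_axioms_def group_action_left_translation)
qed

end

lemma finite_bseq: "finite (bseq n)"
  using finite_lists_length_eq[of "UNIV :: bool set" n] by (simp add: bseq_def)

definition ball_group :: "nat \<Rightarrow> nat \<Rightarrow> (bool list fword \<Rightarrow> bool list fword) monoid" where
  "ball_group n M = BijGroup (word_ball (bseq n) (n + M + 1))"

lemma finite_carrier_ball_group: "finite (carrier (ball_group n M))"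
  by (simp add: ball_group_def carrier_BijGroup finite_Bij finite_word_ball finite_bseq)

lemma card_carrier_ball_group_ge: "n + M + 2 \<le> card (carrier (ball_group n M))"
proof -
  have "replicate n False \<in> bseq n"
    by (simp add: bseq_def)
  then have "Suc (n + M + 1) \<le> card (word_ball (bseq n) (n + M + 1))"
    by (rule card_word_ball_ge[OF finite_bseq])
  also have "\<dots> \<le> card (carrier (ball_group n M))"
    unfolding ball_group_def carrier_BijGroup by (rule card_word_ball_le_card_Bij[OF finite_bseq])
  finally show ?thesis
    by simp
qed

lemma transport_ball_group:
  assumes f: "bij_betw f (carrier (ball_group n M)) A"
  defines "G \<equiv> transport_group (ball_group n M) f A"
    and "c \<equiv> f \<circ> ball_rep (bseq n) (n + M + 1)"
  shows "group G" "carrier G = A" "c \<in> hom (free_group (bseq n)) G" "inj_on c (W n)"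
proof -
  have H: "group (ball_group n M)"
    by (simp add: ball_group_def group_BijGroup)
  show "group G"
    unfolding G_def using H f by (rule group_transport_group)
  show "carrier G = A"
    by (simp add: G_def transport_group_def)
  have "ball_rep (bseq n) (n + M + 1) \<in> hom (free_group (bseq n)) (ball_group n M)"
    unfolding ball_group_def by (rule ball_rep_hom)
  then show "c \<in> hom (free_group (bseq n)) G"
    unfolding c_def G_def using transport_group_hom[OF f] by (rule hom_compose)
  have W: "W n \<subseteq> word_ball (bseq n) (n + M + 1)"
    unfolding W_eq_word_ball by (rule word_ball_mono) simp
  have "ball_rep (bseq n) (n + M + 1) ` W n \<subseteq> carrier (ball_group n M)"
    using hom_carrier[OF ball_rep_hom] W by (fastforce simp: ball_group_def word_ball_def)
  then show "inj_on c (W n)"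
    unfolding c_def using f inj_on_subset[OF inj_on_ball_rep W]
    by (auto intro: comp_inj_on inj_on_subset simp: bij_betw_def)
qed

primrec block_start :: "nat \<Rightarrow> nat" where
  "block_start 0 = 0"
| "block_start (Suc n) = block_start n + card (carrier (ball_group n (block_start n)))"

lemma card_Ival_block_start: "card (Ival block_start n) = card (carrier (ball_group n (block_start n)))"
  by (simp add: Ival_def)

lemma sum_card_Ival_block_start: "(\<Sum>k<n. int (card (Ival block_start k))) = int (block_start n)"
  by (induction n) (simp_all add: card_Ival_block_start)

lemma strict_mono_block_start: "strict_mono block_start"
proof (rule strict_mono_Suc_iff[THEN iffD2], rule allI)
  show "block_start n < block_start (Suc n)" for n
    using card_carrier_ball_group_ge[of n "block_start n"] by simp
qed

theorem proposition1p2: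
  shows "\<exists>(m :: nat \<Rightarrow> nat) (G :: nat \<Rightarrow> nat monoid)
            (c :: nat \<Rightarrow> bool list fword \<Rightarrow> nat) (\<sigma> :: nat \<Rightarrow> nat \<Rightarrow> nat \<Rightarrow> nat).
     strict_mono m \<and> m 0 = 0 \<and>
     (\<forall>n. group (G n) \<and> finite (carrier (G n))
        \<and> c n \<in> hom (free_group (bseq n)) (G n)
        \<and> faithful_action (G n) (Ival m n) (\<sigma> n)
        \<and> transitive_action (G n) (Ival m n) (\<sigma> n)
        \<and> (\<Sum>k<n. int (card (Ival m k))) < int (card (Ival m n)) - 1
        \<and> inj_on (c n) (W n))"
proof -
  have "\<exists>f. bij_betw f (carrier (ball_group n (block_start n))) (Ival block_start n)" for n
    by (intro finite_same_card_bij finite_carrier_ball_group)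
      (simp_all add: Ival_def card_Ival_block_start)
  then obtain f where f: "\<And>n. bij_betw (f n) (carrier (ball_group n (block_start n))) (Ival block_start n)"
    by metis
  define G where "G n = transport_group (ball_group n (block_start n)) (f n) (Ival block_start n)"
    for n
  define c where "c n = f n \<circ> ball_rep (bseq n) (n + block_start n + 1)" for n
  note level = transport_ball_group[OF f, folded G_def c_def]
  have "finite (carrier (G n))" for n
    by (simp add: level(2) Ival_def)
  moreover have "faithful_action (G n) (Ival block_start n) (left_translation (G n))"
    "transitive_action (G n) (Ival block_start n) (left_translation (G n))" for n
    using group.faithful_action_left_translation[OF level(1)]
      group.transitive_action_left_translation[OF level(1)] level(2) by metis+
  moreover have "(\<Sum>k<n. int (card (Ival block_start k))) < int (card (Ival block_start n)) - 1" for n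
    using card_carrier_ball_group_ge[of n "block_start n"]
    unfolding sum_card_Ival_block_start by (simp add: card_Ival_block_start)
  ultimately show ?thesis
    using strict_mono_block_start level(1,3,4)
    by (intro exI[of _ block_start] exI[of _ G] exI[of _ c] exI[of _ "\<lambda>n. left_translation (G n)"])
      simp
qed

end
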